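(* Let $N(\Theta,\mathbf{X})\in\mathbb{R}^M$ be a neural network with weight vector $\Theta\in\mathbb{R}^n$, evaluated on a fixed training dataset $\mathbf{X}$ of $M$ players, whose $i$-th output $N(\Theta,\mathbf{X})_i=\hat d_i$ is the predicted required difficulty for player $i$. Let $d_1,\dots,d_M\in\mathbb{R}$ be the given (actual) difficulties, $P\in[0,1]$ a desired completion rate and $\delta\ge 0$ a tolerance. Let $\mathcal{M}\subseteq\mathbb{R}^n$ be the set of weights that are local minima of the network's training loss, and let $$\mathcal{C}=\Bigl\{\Theta\in\mathbb{R}^n : \Bigl|\tfrac{1}{M}\textstyle\sum_{i=1}^{M}\mathbb{1}[d_i\ge N(\Theta,\mathbf{X})_i]-P\Bigr|\le\delta\Bigr\},$$ where $\mathbb{1}[\cdot]$ equals $1$ if its argument is true and $0$ otherwise. Assume $\mathcal{M}$ and $\mathcal{C}$ are nonempty and define the projection operators $$\mathcal{P}_{\mathcal{M}}\Theta\in\operatorname{argmin}_{\hat\Theta\in\mathcal{M}}\|\Theta-\hat\Theta\|_2,\qquad \mathcal{P}_{\mathcal{C}}\Theta\in\operatorname{argmin}_{\hat\Theta\in\mathcal{C}}\|\Theta-\hat\Theta\|_2$$ (i.e. each returns a closest point of the respective set, assumed to exist). Starting from an arbitrary initial weight vector $\Theta_1^C$, define for $i\ge1$ the alternating scheme $$\Theta_i^M\leftarrow\mathcal{P}_{\mathcal{M}}\Theta_i^C,\qquad \Theta_{i+1}^C\leftarrow\mathcal{P}_{\mathcal{C}}\Theta_i^M.$$ Then the sequence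 of distances $\|\Theta_i^C-\Theta_i^M\|_2$ converges.
   Context: This is set in a dynamic difficulty adjustment problem: a neural network outputs a required difficulty $\hat d_i$ for each player $i$, trained to minimize a loss (the local minima of which form $\mathcal{M}$), subject to a completion rate constraint requiring that the fraction of players with $d_i\ge\hat d_i$ equal the target $P$ up to tolerance $\delta$ (the set $\mathcal{C}$). $\|\cdot\|_2$ is the Euclidean norm on weight space. *)

theory Defs
  imports "HOL-Analysis.Analysis"
begin

definition local_minima :: "('a::metric_space \<Rightarrow> real) \<Rightarrow> 'a set" where
  "local_minima L = {x. \<exists>e>0. \<forall>y. dist y x < e \<longrightarrow> L x \<le> L y}"

text \<open>Completion-rate constraint set. N th i is the i-th network output (players 1..M)
  on the fixed dataset, d i the actual difficulty of player i.\<close>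
definition completion_set ::
  "('a \<Rightarrow> nat \<Rightarrow> real) \<Rightarrow> (nat \<Rightarrow> real) \<Rightarrow> nat \<Rightarrow> real \<Rightarrow> real \<Rightarrow> 'a set" where
  "completion_set N d M P \<delta> =
     {\<Theta>. \<bar>(1 / real M) * (\<Sum>i=1..M. if d i \<ge> N \<Theta> i then 1 else 0) - P\<bar> \<le> \<delta>}"

definition is_projection :: "'a::real_normed_vector set \<Rightarrow> 'a \<Rightarrow> 'a \<Rightarrow> bool" where
  "is_projection S x p \<longleftrightarrow> is_arg_min (\<lambda>y. norm (x - y)) (\<lambda>y. y \<in> S) p"

end

theory Submission
  imports Defs
begin

text \<open>Neither the network nor the completion-rate constraint matters: for alternating
  projections between any two sets, each projection step can only shorten the gap, because
  the point it replaces is itself a competitor in the minimisation. From the second step on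
  the distances therefore form a non-increasing sequence of non-negative reals, which
  converges.\<close>

lemma is_projection_mem: "is_projection S x p \<Longrightarrow> p \<in> S"
  unfolding is_projection_def is_arg_min_def by blast

lemma is_projection_le: "is_projection S x p \<Longrightarrow> y \<in> S \<Longrightarrow> norm (x - p) \<le> norm (x - y)"
  unfolding is_projection_def is_arg_min_def by (auto simp: not_less)

lemma alternating_projections_dist_Suc_le:
  fixes x p :: "nat \<Rightarrow> 'a::real_normed_vector"
  assumes proj_A: "\<And>i. i \<ge> 1 \<Longrightarrow> is_projection A (x i) (p i)"
    and proj_B: "\<And>i. i \<ge> 1 \<Longrightarrow> is_projection B (p i) (x (Suc i))"
    and "i \<ge> 2"
  shows "norm (x (Suc i) - p (Suc i)) \<le> norm (x i - p i)"
proof -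
  have "p i \<in> A"
    using \<open>i \<ge> 2\<close> by (intro is_projection_mem [OF proj_A]) simp
  have "x i \<in> B" \<comment> \<open>fails for \<open>i = 1\<close>: the starting point need not lie in \<open>B\<close>\<close>
    using is_projection_mem [OF proj_B [of "i - 1"]] \<open>i \<ge> 2\<close> by simp
  have "norm (x (Suc i) - p (Suc i)) \<le> norm (x (Suc i) - p i)"
    using \<open>p i \<in> A\<close> by (intro is_projection_le [OF proj_A]) simp_all
  also have "\<dots> = norm (p i - x (Suc i))"
    by (rule norm_minus_commute)
  also have "\<dots> \<le> norm (p i - x i)"
    using \<open>i \<ge> 2\<close> \<open>x i \<in> B\<close> by (intro is_projection_le [OF proj_B]) simp_all
  also have "\<dots> = norm (x i - p i)"
    by (rule norm_minus_commute)
  finally show ?thesis .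
qed

lemma convergent_if_eventually_Suc_le:
  fixes f :: "nat \<Rightarrow> real"
  assumes "\<And>n. n \<ge> k \<Longrightarrow> f (Suc n) \<le> f n"
    and "\<And>n. b \<le> f n"
  shows "convergent f"
proof -
  have "decseq (\<lambda>n. f (n + k))"
    by (rule decseq_SucI) (simp add: assms(1))
  then obtain l where "(\<lambda>n. f (n + k)) \<longlonglongrightarrow> l"
    using assms(2) by (blast intro: decseq_convergent)
  then show ?thesis
    by (subst convergent_ignore_initial_segment [symmetric, of _ k]) (auto simp: convergent_def)
qed

lemma alternating_projections_dist_convergent:
  fixes x p :: "nat \<Rightarrow> 'a::real_normed_vector"
  assumes "\<And>i. i \<ge> 1 \<Longrightarrow> is_projection A (x i) (p i)"
    and "\<And>i. i \<ge> 1 \<Longrightarrow> is_projection B (p i) (x (Suc i))"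
  shows "convergent (\<lambda>i. norm (x i - p i))"
  by (rule convergent_if_eventually_Suc_le [where k = 2 and b = 0])
    (simp_all add: alternating_projections_dist_Suc_le [of A x p B] assms)

theorem proposition1:
  fixes N :: "real ^ 'n \<Rightarrow> nat \<Rightarrow> real"
    and L :: "real ^ 'n \<Rightarrow> real"
    and d :: "nat \<Rightarrow> real"
    and M :: nat and P \<delta> :: real
    and ThC ThM :: "nat \<Rightarrow> real ^ 'n"
  assumes "M > 0"
    and "0 \<le> P" "P \<le> 1" "0 \<le> \<delta>"
    and "local_minima L \<noteq> {}"
    and "completion_set N d M P \<delta> \<noteq> {}"
    and "\<And>i. i \<ge> 1 \<Longrightarrow> is_projection (local_minima L) (ThC i) (ThM i)"
    and "\<And>i. i \<ge> 1 \<Longrightarrow> is_projection (completion_set N d M P \<delta>) (ThM i) (ThC (Suc i))"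
  shows "convergent (\<lambda>i. norm (ThC i - ThM i))"
  using assms(7,8) by (rule alternating_projections_dist_convergent)

end
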